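(* Under the standing assumptions in the context, for every $k$ the EFOFL gradient estimate satisfies $\mathbb E[g'_k\mid\mathcal H_k]=b_1\nabla F(\theta_k)$.
   Context: Federated setting: $d,N\ge1$, $\mathcal N=\{1,\dots,N\}$; device $i$ has data distribution $D_i$, loss $f_i(\theta,\xi)$ differentiable in $\theta$ with $\mathbb E_{\xi\sim D_i}[\nabla_\theta f_i(\theta,\xi)]=\nabla F_i(\theta)$, where $F_i(\theta)=\mathbb E_{\xi\sim D_i}[f_i(\theta,\xi)]$; $F=\sum_iF_i$. Standing assumptions: (i) $\nabla F_i,\nabla^2F_i$ continuous, $\|\nabla^2F_i\|_2\le b$; (ii) $\theta\mapsto f_i(\theta,\xi)$ Lipschitz with constant $L_\xi$, $\mathbb E_\xi f_i<\infty$; (iv) perturbations $\Phi_k=(\phi_k^1,\dots,\phi_k^d)^T$ independent across iterations, $\mathbb E(\phi_k^j\phi_k^l)=0$ ($j\neq l$), $\mathbb E(\phi_k^j)^2=b_1>0$, $\|\Phi_k\|\le b_2$; step sizes $\eta_k>0$. Wireless model: $h_{i,k}$ real, $\mathbb E h_{i,k}=0$, $\mathbb E(h_{i,k}^2)>0$ independent of $k$, independent across $i,k$; noises $n_{1,k},n_{2,k}$ real zero mean, variances $\sigma_1^2,\sigma_2^2$; samples $\xi_{i,k}\sim D_i$; all mutually independent and independent of the past; $a_i=1/\mathbb E(h_{i,k}^2)$. EFOFL: $g'_k=\Phi_k(\sum_ia_ih_{i,k}+n_{1,k})(\sum_i(\nabla_\theta f_i(\theta_k,\xi_{i,k}))^T\Phi_kh_{i,k}+n_{2,k})$,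 $\theta_{k+1}=\theta_k-\eta_kg'_k$. History $\mathcal H_k=\{\theta_0,\xi_0,\dots,\theta_{k-1},\xi_{k-1},\theta_k\}$. *)

theory Defs
  imports "HOL-Probability.Probability"
begin

definition gprime ::
  "('n::finite \<Rightarrow> real) \<Rightarrow> real^'d \<Rightarrow> ('n \<Rightarrow> real) \<Rightarrow> real \<Rightarrow> ('n \<Rightarrow> real^'d) \<Rightarrow> real \<Rightarrow> real^'d"
  where
  "gprime a Phi h n1 G n2 =
     (((\<Sum>i\<in>UNIV. a i * h i) + n1) * ((\<Sum>i\<in>UNIV. (G i \<bullet> Phi) * h i) + n2)) *\<^sub>R Phi"

definition hist ::
  "'a measure \<Rightarrow> (nat \<Rightarrow> 'a \<Rightarrow> real^'d) \<Rightarrow> 'x measure \<Rightarrow> (nat \<Rightarrow> 'n \<Rightarrow> 'a \<Rightarrow> 'x) \<Rightarrow> nat \<Rightarrow> 'a measure"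
  where
  "hist M theta S xi k = sigma (space M)
     ((\<Union>j\<in>{..k}. sets (vimage_algebra (space M) (theta j) borel)) \<union>
      (\<Union>j\<in>{..<k}. \<Union>i. sets (vimage_algebra (space M) (xi j i) S)))"

text \<open>Index type for the family of primitive random variables (used to state mutual independence).\<close>
datatype 'n rvar = Theta0 | PhiV nat | HV nat 'n | N1V nat | N2V nat | XiV nat 'n

end

theory Submission
  imports Defs
begin

text \<open>The iterate \<theta>_k is a function of \<theta>_0 and of the variables drawn in iterations 0, ..., k - 1,
  whereas g'_k combines \<theta>_k with the fresh variables of iteration k, which are independent of that
  past. Conditioning on the history therefore freezes \<theta>_k = \<theta> and averages over the fresh variables
  only. Expanding the j-th component of g'_k into monomials, each expectation factorises over
  independent groups, and every monomial containing a zero-mean channel gain or noise to the first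
  power vanishes. What survives is a_l h_l^2 (\<nabla>f_l \<bullet> \<Phi>) \<Phi>_j, whose mean is
  a_l E[h_l^2] b1 \<partial>_j F_l = b1 \<partial>_j F_l by the orthogonality of the perturbation.

  For \<theta>_k to be a random variable at all, the stochastic gradient must be jointly measurable in
  parameter and sample: it is a pointwise limit of difference quotients of the loss, and the loss is
  jointly measurable because it is continuous in the parameter.\<close>

section \<open>Joint measurability of stochastic gradients\<close>

lemma borel_measurable_vec_nth [measurable (raw)]:
  fixes f :: "'a \<Rightarrow> real^'d"
  shows "f \<in> borel_measurable M \<Longrightarrow> (\<lambda>x. f x $ i) \<in> borel_measurable M"
  using measurable_compose[OF _ borel_measurable_nth] by blast

lemma borel_measurable_vecI:
  fixes f :: "'a \<Rightarrow> real^'d"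
  assumes "\<And>i. (\<lambda>x. f x $ i) \<in> borel_measurable M"
  shows "f \<in> borel_measurable M"
  unfolding borel_measurable_euclidean_space[where f=f]
  using assms by (auto simp: Basis_vec_def inner_axis)

lemma LIMSEQ_floor_grid:
  fixes x :: real
  shows "(\<lambda>n. of_int \<lfloor>real (Suc n) * x\<rfloor> / real (Suc n)) \<longlonglongrightarrow> x"
proof (rule tendsto_sandwich[of "\<lambda>n. x - 1 / real (Suc n)" _ _ "\<lambda>n. x"])
  have "(\<lambda>n. 1 / real (Suc n)) \<longlonglongrightarrow> 0"
    using LIMSEQ_Suc[OF lim_const_over_n[of 1]] by simp
  then show "(\<lambda>n. x - 1 / real (Suc n)) \<longlonglongrightarrow> x"
    using tendsto_diff[OF tendsto_const[of x]] by fastforce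
  show "\<forall>\<^sub>F n in sequentially. x - 1 / real (Suc n) \<le> of_int \<lfloor>real (Suc n) * x\<rfloor> / real (Suc n)"
  proof (intro always_eventually allI)
    fix n
    have "real (Suc n) * x - 1 \<le> of_int \<lfloor>real (Suc n) * x\<rfloor>" by linarith
    then have "(real (Suc n) * x - 1) / real (Suc n) \<le> of_int \<lfloor>real (Suc n) * x\<rfloor> / real (Suc n)"
      by (rule divide_right_mono) simp
    then show "x - 1 / real (Suc n) \<le> of_int \<lfloor>real (Suc n) * x\<rfloor> / real (Suc n)"
      by (simp add: diff_divide_distrib)
  qed
  show "\<forall>\<^sub>F n in sequentially. of_int \<lfloor>real (Suc n) * x\<rfloor> / real (Suc n) \<le> x"
    by (intro always_eventually allI) (simp add: field_simps)
qed simp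

text \<open>Approximate the parameter by grid points of mesh 1/(n+1), which take only countably many values.\<close>
lemma borel_measurable_caratheodory:
  fixes g :: "real^'d \<Rightarrow> 'x \<Rightarrow> real"
  assumes cont: "\<And>\<xi>. continuous_on UNIV (\<lambda>t. g t \<xi>)"
    and meas: "\<And>t. g t \<in> borel_measurable S"
  shows "(\<lambda>p. g (fst p) (snd p)) \<in> borel_measurable (borel \<Otimes>\<^sub>M S)"
proof -
  define grid :: "nat \<Rightarrow> real^'d \<Rightarrow> 'd \<Rightarrow> int" where "grid n t = (\<lambda>m. \<lfloor>real (Suc n) * t $ m\<rfloor>)" for n t
  define point :: "nat \<Rightarrow> ('d \<Rightarrow> int) \<Rightarrow> real^'d" where "point n q = (\<chi> m. of_int (q m) / real (Suc n))" for n q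
  show ?thesis
  proof (rule borel_measurable_LIMSEQ_real)
    fix n
    have "(\<lambda>p. grid n (fst p)) \<in> measurable (borel \<Otimes>\<^sub>M S) (count_space UNIV)"
      unfolding measurable_count_space_eq2_countable
    proof safe
      fix q
      have "(\<lambda>p. grid n (fst p)) -` {q} \<inter> space (borel \<Otimes>\<^sub>M S)
          = {p \<in> space (borel \<Otimes>\<^sub>M S). \<forall>m. \<lfloor>real (Suc n) * fst p $ m\<rfloor> = q m}"
        by (auto simp: grid_def)
      also have "\<dots> \<in> sets (borel \<Otimes>\<^sub>M S)" by measurable
      finally show "(\<lambda>p. grid n (fst p)) -` {q} \<inter> space (borel \<Otimes>\<^sub>M S) \<in> sets (borel \<Otimes>\<^sub>M S)" .
    qed auto
    then show "(\<lambda>p. g (point n (grid n (fst p))) (snd p)) \<in> borel_measurable (borel \<Otimes>\<^sub>M S)"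
      by (intro measurable_compose_countable[where f="\<lambda>q p. g (point n q) (snd p)" and g="\<lambda>p. grid n (fst p)"])
         (use meas in measurable)
  next
    fix p :: "(real^'d) \<times> 'x"
    have "(\<lambda>n. point n (grid n (fst p))) \<longlonglongrightarrow> fst p"
      unfolding point_def grid_def by (rule vec_tendstoI) (simp only: vec_lambda_beta LIMSEQ_floor_grid)
    moreover have "isCont (\<lambda>t. g t (snd p)) (fst p)"
      using cont[of "snd p"] by (simp add: continuous_on_eq_continuous_at)
    ultimately show "(\<lambda>n. g (point n (grid n (fst p))) (snd p)) \<longlonglongrightarrow> g (fst p) (snd p)"
      by (rule isCont_tendsto_compose[rotated])
  qed
qed

lemma LIMSEQ_partial_derivative:
  fixes \<phi> :: "real^'d \<Rightarrow> real"
  assumes "(\<phi> has_derivative (\<lambda>v. g \<bullet> v)) (at \<theta>)"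
  shows "(\<lambda>n. (\<phi> (\<theta> + (1 / real (Suc n)) *\<^sub>R axis m 1) - \<phi> \<theta>) / (1 / real (Suc n))) \<longlonglongrightarrow> g $ m"
proof -
  have "((\<lambda>s. \<theta> + s *\<^sub>R axis m 1) has_derivative (\<lambda>s. s *\<^sub>R axis m 1)) (at 0)"
    by (auto intro!: derivative_eq_intros)
  moreover have "(\<phi> has_derivative (\<lambda>v. g \<bullet> v)) (at (\<theta> + 0 *\<^sub>R axis m 1))"
    using assms by simp
  ultimately have "((\<lambda>s. \<phi> (\<theta> + s *\<^sub>R axis m 1)) has_derivative (\<lambda>s. g \<bullet> (s *\<^sub>R axis m 1))) (at 0)"
    by (rule diff_chain_at[unfolded o_def])
  moreover have "(\<lambda>s. g \<bullet> (s *\<^sub>R axis m 1)) = (*) (g $ m)"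
    by (auto simp: inner_axis)
  ultimately have "((\<lambda>s. \<phi> (\<theta> + s *\<^sub>R axis m 1)) has_real_derivative g $ m) (at 0)"
    by (simp add: has_field_derivative_def)
  then have "((\<lambda>s. (\<phi> (\<theta> + s *\<^sub>R axis m 1) - \<phi> \<theta>) / s) \<longlongrightarrow> g $ m) (at 0)"
    by (simp add: has_field_derivative_iff)
  moreover have "(\<lambda>n. 1 / real (Suc n)) \<longlonglongrightarrow> 0"
    using LIMSEQ_Suc[OF lim_const_over_n[of 1]] by simp
  ultimately show ?thesis
    unfolding tendsto_at_iff_sequentially o_def
    by (elim allE[of _ "\<lambda>n. 1 / real (Suc n)"]) simp
qed

lemma borel_measurable_gradient:
  fixes f :: "real^'d \<Rightarrow> 'x \<Rightarrow> real" and gf :: "real^'d \<Rightarrow> 'x \<Rightarrow> real^'d"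
  assumes deriv: "\<And>\<theta> \<xi>. ((\<lambda>t. f t \<xi>) has_derivative (\<lambda>v. gf \<theta> \<xi> \<bullet> v)) (at \<theta>)"
    and meas: "\<And>t. f t \<in> borel_measurable S"
  shows "(\<lambda>p. gf (fst p) (snd p)) \<in> borel_measurable (borel \<Otimes>\<^sub>M S)"
proof (rule borel_measurable_vecI)
  fix m
  have "continuous_on UNIV (\<lambda>t. f t \<xi>)" for \<xi>
    by (rule continuous_at_imp_continuous_on) (use has_derivative_continuous[OF deriv] in auto)
  from borel_measurable_caratheodory[OF this meas]
  have [measurable]: "(\<lambda>p. f (fst p) (snd p)) \<in> borel_measurable (borel \<Otimes>\<^sub>M S)" .
  have [measurable]: "(\<lambda>p. f (fst p + e) (snd p)) \<in> borel_measurable (borel \<Otimes>\<^sub>M S)" for e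
  proof -
    have "(\<lambda>p. (fst p + e, snd p)) \<in> measurable (borel \<Otimes>\<^sub>M S) (borel \<Otimes>\<^sub>M S)" by measurable
    from measurable_compose[OF this, of "\<lambda>p. f (fst p) (snd p)"] show ?thesis by simp
  qed
  show "(\<lambda>p. gf (fst p) (snd p) $ m) \<in> borel_measurable (borel \<Otimes>\<^sub>M S)"
    by (rule borel_measurable_LIMSEQ_real[OF LIMSEQ_partial_derivative[OF deriv]]) measurable
qed

section \<open>Conditioning on a sub-sigma-algebra independent of the remaining randomness\<close>

lemma (in prob_space) indep_var_subalgebras:
  assumes GK: "indep_set (sets G) (sets K)" and G: "subalgebra M G" and K: "subalgebra M K"
    and X: "X \<in> measurable G N1" and Y: "Y \<in> measurable K N2"
  shows "indep_var N1 X N2 Y"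
  unfolding indep_var_eq
proof (intro conjI)
  show "random_variable N1 X" by (rule measurable_from_subalg[OF G X])
  show "random_variable N2 Y" by (rule measurable_from_subalg[OF K Y])
  have sX: "sigma_sets (space M) {X -` A \<inter> space M | A. A \<in> sets N1} \<subseteq> sets G"
    using X G sets.sigma_sets_subset[of "{X -` A \<inter> space M | A. A \<in> sets N1}" G]
    by (auto simp: measurable_def subalgebra_def)
  have sY: "sigma_sets (space M) {Y -` A \<inter> space M | A. A \<in> sets N2} \<subseteq> sets K"
    using Y K sets.sigma_sets_subset[of "{Y -` A \<inter> space M | A. A \<in> sets N2}" K]
    by (auto simp: measurable_def subalgebra_def)
  show "indep_set (sigma_sets (space M) {X -` A \<inter> space M | A. A \<in> sets N1})
      (sigma_sets (space M) {Y -` A \<inter> space M | A. A \<in> sets N2})"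
    using GK unfolding indep_set_def
    by (rule indep_sets_mono_sets) (use sX sY in \<open>auto split: bool.split\<close>)
qed

text \<open>Independence of G and K means that the diagonal map x \<mapsto> (x, x) has the product law.\<close>
lemma (in prob_space) nn_integral_indep_diagonal:
  assumes G: "subalgebra M G" and K: "subalgebra M K" and GK: "indep_set (sets G) (sets K)"
    and \<psi>: "\<psi> \<in> borel_measurable (G \<Otimes>\<^sub>M K)"
  shows "(\<integral>\<^sup>+x. \<psi> (x, x) \<partial>M) = (\<integral>\<^sup>+x. \<integral>\<^sup>+y. \<psi> (x, y) \<partial>M \<partial>M)"
proof -
  have idG: "(\<lambda>x. x) \<in> measurable M G"
    by (rule measurable_from_subalg[OF G]) simp
  have idK: "(\<lambda>x. x) \<in> measurable M K"
    by (rule measurable_from_subalg[OF K]) simp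
  define DG where "DG = distr M G (\<lambda>x. x)"
  define DK where "DK = distr M K (\<lambda>x. x)"
  interpret DK: prob_space DK unfolding DK_def by (rule prob_space_distr[OF idK])
  have "indep_var G (\<lambda>x. x) K (\<lambda>x. x)"
    by (rule indep_var_subalgebras[OF GK G K]) (simp_all add: measurable_ident_sets)
  then have product: "DG \<Otimes>\<^sub>M DK = distr M (G \<Otimes>\<^sub>M K) (\<lambda>x. (x, x))"
    unfolding indep_var_distribution_eq DG_def DK_def by blast
  have \<psi>D: "\<psi> \<in> borel_measurable (DG \<Otimes>\<^sub>M DK)"
    using \<psi> measurable_cong_sets[OF sets_pair_measure_cong[of DG G DK K] refl]
    by (simp add: DG_def DK_def)
  have "(\<integral>\<^sup>+x. \<psi> (x, x) \<partial>M) = (\<integral>\<^sup>+q. \<psi> q \<partial>distr M (G \<Otimes>\<^sub>M K) (\<lambda>x. (x, x)))"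
    using \<psi> by (intro nn_integral_distr[symmetric, OF measurable_Pair[OF idG idK]]) simp
  also have "\<dots> = (\<integral>\<^sup>+x. \<integral>\<^sup>+y. \<psi> (x, y) \<partial>DK \<partial>DG)"
    unfolding product[symmetric] by (rule DK.nn_integral_fst[symmetric, OF \<psi>D])
  also have "\<dots> = (\<integral>\<^sup>+x. \<integral>\<^sup>+y. \<psi> (x, y) \<partial>M \<partial>M)"
  proof -
    have "(\<integral>\<^sup>+y. \<psi> (x, y) \<partial>DK) = (\<integral>\<^sup>+y. \<psi> (x, y) \<partial>M)" if "x \<in> space M" for x
    proof -
      have "x \<in> space G" using that G by (simp add: subalgebra_def)
      from measurable_Pair2[OF \<psi> this] show ?thesis
        unfolding DK_def by (intro nn_integral_distr[OF idK]) simp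
    qed
    moreover have "(\<lambda>x. \<integral>\<^sup>+y. \<psi> (x, y) \<partial>DK) \<in> borel_measurable G"
      using DK.borel_measurable_nn_integral_fst[OF \<psi>D] by (simp add: DG_def)
    ultimately show ?thesis
      unfolding DG_def by (subst nn_integral_distr[OF idG]) (auto intro: nn_integral_cong)
  qed
  finally show ?thesis .
qed

lemma (in prob_space) nn_cond_exp_indep_freeze:
  assumes H: "subalgebra M H" and HG: "sets H \<subseteq> sets G" and G: "subalgebra M G"
    and K: "subalgebra M K" and GK: "indep_set (sets G) (sets K)"
    and Z: "Z \<in> measurable H N"
    and \<psi>: "(\<lambda>p. \<psi> (fst p) (snd p)) \<in> borel_measurable (N \<Otimes>\<^sub>M K)"
  shows "AE x in M. nn_cond_exp M H (\<lambda>x. \<psi> (Z x) x) x = (\<integral>\<^sup>+y. \<psi> (Z x) y \<partial>M)"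
proof -
  interpret sigma_finite_subalgebra M H
    using H by (intro finite_measure_subalgebra_is_sigma_finite)
      (simp add: finite_measure_subalgebra_def finite_measure_subalgebra_axioms_def finite_measure_axioms)
  have idK: "(\<lambda>x. x) \<in> measurable M K"
    by (rule measurable_from_subalg[OF K]) simp
  have "subalgebra G H"
    using H G HG by (simp add: subalgebra_def)
  then have ZG: "Z \<in> measurable G N"
    using Z by (rule measurable_from_subalg)
  have ZM[measurable]: "Z \<in> measurable M N"
    using G ZG by (rule measurable_from_subalg)
  have "(\<lambda>p. (fst p, snd p)) \<in> measurable (N \<Otimes>\<^sub>M M) (N \<Otimes>\<^sub>M K)"
    using idK by measurable
  from measurable_compose[OF this \<psi>]
  have [measurable]: "case_prod \<psi> \<in> borel_measurable (N \<Otimes>\<^sub>M M)"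
    by (simp add: split_beta')
  have \<psi>GK: "(\<lambda>p. \<psi> (Z (fst p)) (snd p)) \<in> borel_measurable (G \<Otimes>\<^sub>M K)"
    using measurable_compose[OF _ \<psi>, of "\<lambda>p. (Z (fst p), snd p)"] ZG by simp
  define \<Psi> where "\<Psi> z = (\<integral>\<^sup>+y. \<psi> z y \<partial>M)" for z
  have [measurable]: "\<Psi> \<in> borel_measurable N"
    unfolding \<Psi>_def by measurable
  have "(\<integral>\<^sup>+x\<in>A. \<psi> (Z x) x \<partial>M) = (\<integral>\<^sup>+x\<in>A. \<Psi> (Z x) \<partial>M)" if A: "A \<in> sets H" for A
  proof -
    have [measurable]: "A \<in> sets G" using A HG by blast
    have "(\<integral>\<^sup>+x\<in>A. \<psi> (Z x) x \<partial>M) = (\<integral>\<^sup>+x. indicator A x * \<psi> (Z x) x \<partial>M)"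
      by (simp add: mult.commute)
    also have "\<dots> = (\<integral>\<^sup>+x. \<integral>\<^sup>+y. indicator A x * \<psi> (Z x) y \<partial>M \<partial>M)"
      using nn_integral_indep_diagonal[OF G K GK, of "\<lambda>p. indicator A (fst p) * \<psi> (Z (fst p)) (snd p)"]
        \<psi>GK by simp
    also have "\<dots> = (\<integral>\<^sup>+x. indicator A x * \<Psi> (Z x) \<partial>M)"
      unfolding \<Psi>_def by (intro nn_integral_cong nn_integral_cmult) measurable
    also have "\<dots> = (\<integral>\<^sup>+x\<in>A. \<Psi> (Z x) \<partial>M)"
      by (simp add: mult.commute)
    finally show ?thesis .
  qed
  moreover have "(\<lambda>x. \<psi> (Z x) x) \<in> borel_measurable M"
    using measurable_compose[OF measurable_Pair[OF ZM idK] \<psi>] by simp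
  moreover have "(\<lambda>x. \<Psi> (Z x)) \<in> borel_measurable H"
    using Z by measurable
  ultimately have "AE x in M. \<Psi> (Z x) = nn_cond_exp M H (\<lambda>x. \<psi> (Z x) x) x"
    by (rule nn_cond_exp_charact)
  then show ?thesis
    by (auto simp: \<Psi>_def)
qed

lemma (in prob_space) real_cond_exp_indep_freeze:
  assumes H: "subalgebra M H" and HG: "sets H \<subseteq> sets G" and G: "subalgebra M G"
    and K: "subalgebra M K" and GK: "indep_set (sets G) (sets K)"
    and Z: "Z \<in> measurable H N"
    and \<phi>: "(\<lambda>p. \<phi> (fst p) (snd p)) \<in> borel_measurable (N \<Otimes>\<^sub>M K)"
    and integrable: "\<And>z. integrable M (\<phi> z)"
  shows "AE x in M. real_cond_exp M H (\<lambda>x. \<phi> (Z x) x) x = (\<integral>y. \<phi> (Z x) y \<partial>M)"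
proof -
  note freeze = nn_cond_exp_indep_freeze[OF H HG G K GK Z]
  have "AE x in M. nn_cond_exp M H (\<lambda>x. ennreal (\<phi> (Z x) x)) x = (\<integral>\<^sup>+y. ennreal (\<phi> (Z x) y) \<partial>M)"
    using \<phi> by (intro freeze) measurable
  moreover have "AE x in M. nn_cond_exp M H (\<lambda>x. ennreal (- \<phi> (Z x) x)) x = (\<integral>\<^sup>+y. ennreal (- \<phi> (Z x) y) \<partial>M)"
    using \<phi> by (intro freeze) measurable
  ultimately show ?thesis
    by eventually_elim (simp add: real_cond_exp_def real_lebesgue_integral_def[OF integrable])
qed

section \<open>Sigma-algebras generated by parts of an independent family\<close>

locale indep_generators = prob_space M for M :: "'a measure" +
  fixes E :: "'i \<Rightarrow> 'a set set"
  assumes indep_sets_generators: "indep_sets E UNIV"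
    and Int_stable_generators: "Int_stable (E v)"
    and generators_subset_sets: "E v \<subseteq> sets M"
begin

definition gen_sigma :: "'i set \<Rightarrow> 'a measure" where
  "gen_sigma J = sigma (space M) (\<Union>v\<in>J. E v)"

lemma generators_subset_space: "(\<Union>v\<in>J. E v) \<subseteq> Pow (space M)"
  using generators_subset_sets sets.sets_into_space by blast

lemma space_gen_sigma [simp]: "space (gen_sigma J) = space M"
  unfolding gen_sigma_def using generators_subset_space by simp

lemma sets_gen_sigma: "sets (gen_sigma J) = sigma_sets (space M) (\<Union>v\<in>J. E v)"
  unfolding gen_sigma_def using generators_subset_space by simp

lemma subalgebra_gen_sigma: "subalgebra M (gen_sigma J)"
proof -
  have "sigma_sets (space M) (\<Union>v\<in>J. E v) \<subseteq> sets M"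
    using generators_subset_sets by (intro sets.sigma_sets_subset) auto
  then show ?thesis
    by (simp add: subalgebra_def sets_gen_sigma)
qed

lemma measurable_gen_sigmaI:
  assumes "f \<in> measurable M N" and "E v = sets (vimage_algebra (space M) f N)" and "v \<in> J"
  shows "f \<in> measurable (gen_sigma J) N"
proof (rule measurableI)
  show "f x \<in> space N" if "x \<in> space (gen_sigma J)" for x
    using assms(1) that by (auto simp: measurable_space)
  show "f -` A \<inter> space (gen_sigma J) \<in> sets (gen_sigma J)" if "A \<in> sets N" for A
  proof -
    have "f -` A \<inter> space M \<in> E v"
      using that assms(2) by (simp add: in_vimage_algebra)
    then show ?thesis
      using assms(3) by (auto simp: sets_gen_sigma)
  qed
qed

lemma indep_set_gen_sigma:
  assumes "J1 \<inter> J2 = {}"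
  shows "indep_set (sets (gen_sigma J1)) (sets (gen_sigma J2))"
proof -
  have "indep_sets (\<lambda>b. sigma_sets (space M) (\<Union>v\<in>case_bool J1 J2 b. E v)) UNIV"
  proof (rule indep_sets_collect_sigma)
    show "indep_sets E (\<Union>b\<in>UNIV. case_bool J1 J2 b)"
      by (rule indep_sets_mono_index[OF _ indep_sets_generators]) auto
    show "disjoint_family_on (case_bool J1 J2) UNIV"
      using assms unfolding disjoint_family_on_def by (auto split: bool.split)
  qed (rule Int_stable_generators)
  moreover have "(\<lambda>b. sigma_sets (space M) (\<Union>v\<in>case_bool J1 J2 b. E v))
      = case_bool (sets (gen_sigma J1)) (sets (gen_sigma J2))"
    by (rule ext) (simp add: sets_gen_sigma split: bool.split)
  ultimately show ?thesis
    unfolding indep_set_def by simp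
qed

lemma indep_mult_gen_sigma:
  fixes X Y :: "'a \<Rightarrow> real"
  assumes "J1 \<inter> J2 = {}"
    and "X \<in> borel_measurable (gen_sigma J1)" and "Y \<in> borel_measurable (gen_sigma J2)"
    and "integrable M X" and "integrable M Y"
  shows "integrable M (\<lambda>\<omega>. X \<omega> * Y \<omega>)"
    and "(\<integral>\<omega>. X \<omega> * Y \<omega> \<partial>M) = (\<integral>\<omega>. X \<omega> \<partial>M) * (\<integral>\<omega>. Y \<omega> \<partial>M)"
proof -
  have "indep_var borel X borel Y"
    using assms(2,3)
    by (rule indep_var_subalgebras[OF indep_set_gen_sigma[OF assms(1)] subalgebra_gen_sigma subalgebra_gen_sigma])
  then show "integrable M (\<lambda>\<omega>. X \<omega> * Y \<omega>)"
    and "(\<integral>\<omega>. X \<omega> * Y \<omega> \<partial>M) = (\<integral>\<omega>. X \<omega> \<partial>M) * (\<integral>\<omega>. Y \<omega> \<partial>M)"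
    using indep_var_integrable indep_var_lebesgue_integral assms(4,5) by auto
qed

end

section \<open>The EFOFL model\<close>

lemma borel_measurable_gprime [measurable (raw)]:
  fixes \<Phi> :: "'a \<Rightarrow> real^'d" and G :: "'n::finite \<Rightarrow> 'a \<Rightarrow> real^'d"
  assumes [measurable]: "\<Phi> \<in> borel_measurable N" "\<And>i. g i \<in> borel_measurable N"
    "m1 \<in> borel_measurable N" "\<And>i. G i \<in> borel_measurable N" "m2 \<in> borel_measurable N"
  shows "(\<lambda>\<omega>. gprime a (\<Phi> \<omega>) (\<lambda>i. g i \<omega>) (m1 \<omega>) (\<lambda>i. G i \<omega>) (m2 \<omega>)) \<in> borel_measurable N"
  unfolding gprime_def by measurable

lemma gprime_nth_expand:
  fixes \<Phi> :: "real^'d" and G :: "'n::finite \<Rightarrow> real^'d"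
  shows "gprime a \<Phi> g m1 G m2 $ j =
    (\<Sum>i\<in>UNIV. \<Sum>l\<in>UNIV. a i * (g i * (g l * ((G l \<bullet> \<Phi>) * \<Phi> $ j)))) +
    (\<Sum>l\<in>UNIV. m1 * (g l * ((G l \<bullet> \<Phi>) * \<Phi> $ j))) +
    (\<Sum>i\<in>UNIV. m2 * (a i * (g i * \<Phi> $ j))) + m2 * (m1 * \<Phi> $ j)"
proof -
  define A where "A = (\<Sum>i\<in>UNIV. a i * g i)"
  define B where "B = (\<Sum>l\<in>UNIV. (G l \<bullet> \<Phi>) * g l)"
  have B_j: "(\<Sum>l\<in>UNIV. g l * ((G l \<bullet> \<Phi>) * \<Phi> $ j)) = B * \<Phi> $ j"
    unfolding B_def sum_distrib_right by (simp add: mult_ac)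
  have "gprime a \<Phi> g m1 G m2 $ j = (A + m1) * (B + m2) * \<Phi> $ j"
    by (simp add: gprime_def A_def B_def)
  also have "\<dots> = A * (B * \<Phi> $ j) + m1 * (B * \<Phi> $ j) + m2 * (A * \<Phi> $ j) + m2 * (m1 * \<Phi> $ j)"
    by (simp add: algebra_simps)
  finally show ?thesis
    unfolding B_j[symmetric] A_def sum_product by (simp add: sum_distrib_left sum_distrib_right mult.assoc)
qed

fun rvar_time :: "'n rvar \<Rightarrow> nat" where
  "rvar_time Theta0 = 0"
| "rvar_time (PhiV m) = Suc m"
| "rvar_time (HV m i) = Suc m"
| "rvar_time (N1V m) = Suc m"
| "rvar_time (N2V m) = Suc m"
| "rvar_time (XiV m i) = Suc m"

definition efofl_generator ::
  "'a measure \<Rightarrow> 'x measure \<Rightarrow> ('a \<Rightarrow> real^'d) \<Rightarrow> (nat \<Rightarrow> 'a \<Rightarrow> real^'d) \<Rightarrow> (nat \<Rightarrow> 'n \<Rightarrow> 'a \<Rightarrow> real) \<Rightarrow>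
    (nat \<Rightarrow> 'a \<Rightarrow> real) \<Rightarrow> (nat \<Rightarrow> 'a \<Rightarrow> real) \<Rightarrow> (nat \<Rightarrow> 'n \<Rightarrow> 'a \<Rightarrow> 'x) \<Rightarrow> 'n rvar \<Rightarrow> 'a set set"
  where
  "efofl_generator M S theta0 Phi h n1 n2 xi = (\<lambda>v. case v of
       Theta0 \<Rightarrow> sets (vimage_algebra (space M) theta0 borel)
     | PhiV m \<Rightarrow> sets (vimage_algebra (space M) (Phi m) borel)
     | HV m i \<Rightarrow> sets (vimage_algebra (space M) (h m i) borel)
     | N1V m \<Rightarrow> sets (vimage_algebra (space M) (n1 m) borel)
     | N2V m \<Rightarrow> sets (vimage_algebra (space M) (n2 m) borel)
     | XiV m i \<Rightarrow> sets (vimage_algebra (space M) (xi m i) S))"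

locale efofl = prob_space M for M :: "'a measure" +
  fixes S :: "'x measure" and D :: "'n::finite \<Rightarrow> 'x measure"
    and f :: "'n \<Rightarrow> real^'d \<Rightarrow> 'x \<Rightarrow> real"
    and gf :: "'n \<Rightarrow> real^'d \<Rightarrow> 'x \<Rightarrow> real^'d"
    and gF :: "'n \<Rightarrow> real^'d \<Rightarrow> real^'d"
    and b1 b2 :: real
    and Phi :: "nat \<Rightarrow> 'a \<Rightarrow> real^'d"
    and h :: "nat \<Rightarrow> 'n \<Rightarrow> 'a \<Rightarrow> real"
    and c a :: "'n \<Rightarrow> real"
    and n1 n2 :: "nat \<Rightarrow> 'a \<Rightarrow> real"
    and xi :: "nat \<Rightarrow> 'n \<Rightarrow> 'a \<Rightarrow> 'x"
    and theta :: "nat \<Rightarrow> 'a \<Rightarrow> real^'d"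
    and eta :: "nat \<Rightarrow> real"
  assumes D_sets: "\<And>i. sets (D i) = sets S"
    and f_grad: "\<And>i \<theta> \<xi>. ((\<lambda>t. f i t \<xi>) has_derivative (\<lambda>v. gf i \<theta> \<xi> \<bullet> v)) (at \<theta>)"
    and f_int: "\<And>i \<theta>. integrable (D i) (f i \<theta>)"
    and gf_int: "\<And>i \<theta>. integrable (D i) (gf i \<theta>)"
    and gf_exp: "\<And>i \<theta>. (\<integral>\<xi>. gf i \<theta> \<xi> \<partial>D i) = gF i \<theta>"
    and Phi_meas: "\<And>k. Phi k \<in> borel_measurable M"
    and Phi_orth: "\<And>k j l. j \<noteq> l \<Longrightarrow> expectation (\<lambda>\<omega>. Phi k \<omega> $ j * Phi k \<omega> $ l) = 0"
    and Phi_sq: "\<And>k j. expectation (\<lambda>\<omega>. (Phi k \<omega> $ j)^2) = b1"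
    and Phi_bound: "\<And>k \<omega>. \<omega> \<in> space M \<Longrightarrow> norm (Phi k \<omega>) \<le> b2"
    and h_meas: "\<And>k i. h k i \<in> borel_measurable M"
    and h_sq_int: "\<And>k i. integrable M (\<lambda>\<omega>. (h k i \<omega>)^2)"
    and h_mean: "\<And>k i. expectation (h k i) = 0"
    and h_var: "\<And>k i. expectation (\<lambda>\<omega>. (h k i \<omega>)^2) = c i"
    and c_pos: "\<And>i. c i > 0"
    and a_def: "\<And>i. a i = 1 / c i"
    and n1_meas: "\<And>k. n1 k \<in> borel_measurable M"
    and n2_meas: "\<And>k. n2 k \<in> borel_measurable M"
    and n1_sq_int: "\<And>k. integrable M (\<lambda>\<omega>. (n1 k \<omega>)^2)"
    and n2_sq_int: "\<And>k. integrable M (\<lambda>\<omega>. (n2 k \<omega>)^2)"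
    and n1_mean: "\<And>k. expectation (n1 k) = 0"
    and n2_mean: "\<And>k. expectation (n2 k) = 0"
    and xi_meas: "\<And>k i. xi k i \<in> measurable M S"
    and xi_distr: "\<And>k i. distr M S (xi k i) = D i"
    and theta0_meas: "theta 0 \<in> borel_measurable M"
    and indep: "indep_sets (efofl_generator M S (theta 0) Phi h n1 n2 xi) UNIV"
    and iter: "\<And>m \<omega>. theta (Suc m) \<omega> = theta m \<omega> - eta m *\<^sub>R
         gprime a (Phi m \<omega>) (\<lambda>i. h m i \<omega>) (n1 m \<omega>) (\<lambda>i. gf i (theta m \<omega>) (xi m i \<omega>)) (n2 m \<omega>)"
begin

declare theta0_meas [measurable] Phi_meas [measurable] h_meas [measurable]
  n1_meas [measurable] n2_meas [measurable] xi_meas [measurable]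

sublocale indep_generators M "efofl_generator M S (theta 0) Phi h n1 n2 xi"
proof
  show "indep_sets (efofl_generator M S (theta 0) Phi h n1 n2 xi) UNIV"
    by (rule indep)
  show "Int_stable (efofl_generator M S (theta 0) Phi h n1 n2 xi v)" for v
    by (cases v) (simp_all add: efofl_generator_def Int_stable_def)
  show "efofl_generator M S (theta 0) Phi h n1 n2 xi v \<subseteq> sets M" for v
    using measurable_iff_sets[THEN iffD1, OF theta0_meas] measurable_iff_sets[THEN iffD1, OF Phi_meas]
      measurable_iff_sets[THEN iffD1, OF h_meas] measurable_iff_sets[THEN iffD1, OF n1_meas]
      measurable_iff_sets[THEN iffD1, OF n2_meas] measurable_iff_sets[THEN iffD1, OF xi_meas]
    by (cases v) (simp_all add: efofl_generator_def)
qed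

lemma measurable_gen_sigma_rvar [measurable]:
  shows "Theta0 \<in> J \<Longrightarrow> theta 0 \<in> borel_measurable (gen_sigma J)"
    and "PhiV m \<in> J \<Longrightarrow> Phi m \<in> borel_measurable (gen_sigma J)"
    and "HV m i \<in> J \<Longrightarrow> h m i \<in> borel_measurable (gen_sigma J)"
    and "N1V m \<in> J \<Longrightarrow> n1 m \<in> borel_measurable (gen_sigma J)"
    and "N2V m \<in> J \<Longrightarrow> n2 m \<in> borel_measurable (gen_sigma J)"
    and "XiV m i \<in> J \<Longrightarrow> xi m i \<in> measurable (gen_sigma J) S"
  using measurable_gen_sigmaI[OF theta0_meas, where v=Theta0]
    measurable_gen_sigmaI[OF Phi_meas, where v="PhiV m"] measurable_gen_sigmaI[OF h_meas, where v="HV m i"]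
    measurable_gen_sigmaI[OF n1_meas, where v="N1V m"] measurable_gen_sigmaI[OF n2_meas, where v="N2V m"]
    measurable_gen_sigmaI[OF xi_meas, where v="XiV m i"]
  by (simp_all add: efofl_generator_def)

lemma borel_measurable_gf [measurable (raw)]:
  assumes "X \<in> borel_measurable N" and "Y \<in> measurable N S"
  shows "(\<lambda>\<omega>. gf i (X \<omega>) (Y \<omega>)) \<in> borel_measurable N"
proof -
  have "f i t \<in> borel_measurable S" for t
    using borel_measurable_integrable[OF f_int] by (simp add: measurable_cong_sets[OF D_sets refl])
  from borel_measurable_gradient[OF f_grad this]
  have "(\<lambda>p. gf i (fst p) (snd p)) \<in> borel_measurable (borel \<Otimes>\<^sub>M S)" .
  from measurable_compose[OF measurable_Pair[OF assms] this] show ?thesis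
    by simp
qed

definition round_estimate :: "nat \<Rightarrow> real^'d \<Rightarrow> 'a \<Rightarrow> real^'d" where
  "round_estimate k \<theta> \<omega> = gprime a (Phi k \<omega>) (\<lambda>i. h k i \<omega>) (n1 k \<omega>) (\<lambda>i. gf i \<theta> (xi k i \<omega>)) (n2 k \<omega>)"

lemma integrable_h: "integrable M (h k i)"
  using square_integrable_imp_integrable[OF h_meas h_sq_int] .

lemma integrable_n1: "integrable M (n1 k)"
  using square_integrable_imp_integrable[OF n1_meas n1_sq_int] .

lemma integrable_n2: "integrable M (n2 k)"
  using square_integrable_imp_integrable[OF n2_meas n2_sq_int] .

lemma abs_Phi_nth_le: "\<omega> \<in> space M \<Longrightarrow> \<bar>Phi k \<omega> $ m\<bar> \<le> b2"
  using component_le_norm_cart[of "Phi k \<omega>" m] Phi_bound[of \<omega> k] by simp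

lemma integrable_Phi_nth: "integrable M (\<lambda>\<omega>. Phi k \<omega> $ m)"
  using abs_Phi_nth_le by (intro integrable_const_bound[where B=b2]) (auto, measurable)

lemma integrable_Phi_nth_mult: "integrable M (\<lambda>\<omega>. Phi k \<omega> $ m * Phi k \<omega> $ l)"
proof (rule integrable_const_bound[where B="b2 * b2"])
  show "AE \<omega> in M. norm (Phi k \<omega> $ m * Phi k \<omega> $ l) \<le> b2 * b2"
    using abs_Phi_nth_le by (auto simp: abs_mult intro!: mult_mono')
qed measurable

lemma integral_Phi_nth_mult: "(\<integral>\<omega>. Phi k \<omega> $ m * Phi k \<omega> $ l \<partial>M) = (if m = l then b1 else 0)"
  using Phi_orth[of m l k] Phi_sq[of k l] by (auto simp: power2_eq_square)

lemma
  shows integrable_sample_gradient: "integrable M (\<lambda>\<omega>. gf l \<theta> (xi k l \<omega>) $ m)"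
    and integral_sample_gradient: "(\<integral>\<omega>. gf l \<theta> (xi k l \<omega>) $ m \<partial>M) = gF l \<theta> $ m"
proof -
  have nth_inner: "(\<lambda>x. gf l \<theta> x $ m) = (\<lambda>x. gf l \<theta> x \<bullet> axis m 1)"
    by (simp add: inner_axis)
  have gf_nth_meas [measurable]: "(\<lambda>x. gf l \<theta> x $ m) \<in> borel_measurable S"
    by measurable
  have "integrable (D l) (\<lambda>x. gf l \<theta> x $ m)"
    unfolding nth_inner using gf_int by simp
  then show "integrable M (\<lambda>\<omega>. gf l \<theta> (xi k l \<omega>) $ m)"
    using integrable_distr_eq[OF xi_meas gf_nth_meas] xi_distr by simp
  have "(\<integral>\<omega>. gf l \<theta> (xi k l \<omega>) $ m \<partial>M) = (\<integral>x. gf l \<theta> x $ m \<partial>distr M S (xi k l))"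
    by (rule integral_distr[OF xi_meas, symmetric]) measurable
  also have "\<dots> = (\<integral>x. gf l \<theta> x \<partial>D l) \<bullet> axis m 1"
    unfolding xi_distr nth_inner by (rule integral_inner_left) (rule gf_int)
  also have "\<dots> = gF l \<theta> $ m"
    by (simp add: gf_exp inner_axis)
  finally show "(\<integral>\<omega>. gf l \<theta> (xi k l \<omega>) $ m \<partial>M) = gF l \<theta> $ m" .
qed

context
  fixes k :: nat and \<theta> :: "real^'d" and j :: 'd
begin

lemma
  shows integrable_projected_gradient: "integrable M (\<lambda>\<omega>. (gf l \<theta> (xi k l \<omega>) \<bullet> Phi k \<omega>) * Phi k \<omega> $ j)"
    and integral_projected_gradient: "(\<integral>\<omega>. (gf l \<theta> (xi k l \<omega>) \<bullet> Phi k \<omega>) * Phi k \<omega> $ j \<partial>M) = b1 * gF l \<theta> $ j"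
proof -
  have components: "(gf l \<theta> (xi k l \<omega>) \<bullet> Phi k \<omega>) * Phi k \<omega> $ j
      = (\<Sum>m\<in>UNIV. gf l \<theta> (xi k l \<omega>) $ m * (Phi k \<omega> $ m * Phi k \<omega> $ j))" for \<omega>
    by (simp add: inner_vec_def sum_distrib_right mult.assoc)
  have X_meas: "(\<lambda>\<omega>. gf l \<theta> (xi k l \<omega>) $ m) \<in> borel_measurable (gen_sigma {XiV k l})" for m
    by measurable
  have Y_meas: "(\<lambda>\<omega>. Phi k \<omega> $ m * Phi k \<omega> $ j) \<in> borel_measurable (gen_sigma {PhiV k})" for m
    by measurable
  have disjoint: "{XiV k l} \<inter> {PhiV k} = {}"
    by simp
  note factor = indep_mult_gen_sigma[OF disjoint X_meas Y_meas integrable_sample_gradient integrable_Phi_nth_mult]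
  show "integrable M (\<lambda>\<omega>. (gf l \<theta> (xi k l \<omega>) \<bullet> Phi k \<omega>) * Phi k \<omega> $ j)"
    unfolding components using factor(1) by (rule Bochner_Integration.integrable_sum)
  have "(\<integral>\<omega>. (gf l \<theta> (xi k l \<omega>) \<bullet> Phi k \<omega>) * Phi k \<omega> $ j \<partial>M)
      = (\<Sum>m\<in>UNIV. gF l \<theta> $ m * (if m = j then b1 else 0))"
    unfolding components using factor
    by (simp add: Bochner_Integration.integral_sum integral_sample_gradient integral_Phi_nth_mult)
  also have "\<dots> = b1 * gF l \<theta> $ j"
    by (simp add: if_distrib[of "\<lambda>x. _ * x"] sum.delta cong: if_cong)
  finally show "(\<integral>\<omega>. (gf l \<theta> (xi k l \<omega>) \<bullet> Phi k \<omega>) * Phi k \<omega> $ j \<partial>M) = b1 * gF l \<theta> $ j" .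
qed

lemma
  shows integrable_channel_projected_gradient:
      "integrable M (\<lambda>\<omega>. h k l \<omega> * ((gf l \<theta> (xi k l \<omega>) \<bullet> Phi k \<omega>) * Phi k \<omega> $ j))"
    and integral_channel_projected_gradient:
      "(\<integral>\<omega>. h k l \<omega> * ((gf l \<theta> (xi k l \<omega>) \<bullet> Phi k \<omega>) * Phi k \<omega> $ j) \<partial>M) = 0"
proof -
  have disjoint: "{HV k l} \<inter> {XiV k l, PhiV k} = {}"
    by simp
  have X_meas: "h k l \<in> borel_measurable (gen_sigma {HV k l})"
    by measurable
  have Y_meas: "(\<lambda>\<omega>. (gf l \<theta> (xi k l \<omega>) \<bullet> Phi k \<omega>) * Phi k \<omega> $ j) \<in> borel_measurable (gen_sigma {XiV k l, PhiV k})"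
    by measurable
  note factor = indep_mult_gen_sigma[OF disjoint X_meas Y_meas integrable_h integrable_projected_gradient]
  show "integrable M (\<lambda>\<omega>. h k l \<omega> * ((gf l \<theta> (xi k l \<omega>) \<bullet> Phi k \<omega>) * Phi k \<omega> $ j))"
    and "(\<integral>\<omega>. h k l \<omega> * ((gf l \<theta> (xi k l \<omega>) \<bullet> Phi k \<omega>) * Phi k \<omega> $ j) \<partial>M) = 0"
    using factor h_mean by simp_all
qed

lemma
  shows integrable_two_channels:
      "integrable M (\<lambda>\<omega>. h k i \<omega> * (h k l \<omega> * ((gf l \<theta> (xi k l \<omega>) \<bullet> Phi k \<omega>) * Phi k \<omega> $ j)))"
    and integral_two_channels:
      "(\<integral>\<omega>. h k i \<omega> * (h k l \<omega> * ((gf l \<theta> (xi k l \<omega>) \<bullet> Phi k \<omega>) * Phi k \<omega> $ j)) \<partial>M)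
        = (if i = l then c l * (b1 * gF l \<theta> $ j) else 0)"
proof -
  define W where "W \<omega> = (gf l \<theta> (xi k l \<omega>) \<bullet> Phi k \<omega>) * Phi k \<omega> $ j" for \<omega>
  have W_meas: "W \<in> borel_measurable (gen_sigma {XiV k l, PhiV k})"
    unfolding W_def by measurable
  have "integrable M (\<lambda>\<omega>. h k i \<omega> * (h k l \<omega> * W \<omega>)) \<and>
      (\<integral>\<omega>. h k i \<omega> * (h k l \<omega> * W \<omega>) \<partial>M) = (if i = l then c l * (b1 * gF l \<theta> $ j) else 0)"
  proof (cases "i = l")
    case True
    have disjoint: "{HV k l} \<inter> {XiV k l, PhiV k} = {}"
      by simp
    have h_sq_meas: "(\<lambda>\<omega>. h k l \<omega> * h k l \<omega>) \<in> borel_measurable (gen_sigma {HV k l})"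
      by measurable
    have h_sq_integrable: "integrable M (\<lambda>\<omega>. h k l \<omega> * h k l \<omega>)"
      using h_sq_int by (simp add: power2_eq_square)
    note factor = indep_mult_gen_sigma[OF disjoint h_sq_meas W_meas h_sq_integrable
        integrable_projected_gradient[of l, folded W_def]]
    then show ?thesis
      using True h_var[of k l] integral_projected_gradient[of l, folded W_def]
      by (simp add: mult.assoc power2_eq_square)
  next
    case False
    then have disjoint: "{HV k i} \<inter> {HV k l, XiV k l, PhiV k} = {}"
      by simp
    have h_meas_gen: "h k i \<in> borel_measurable (gen_sigma {HV k i})"
      by measurable
    have "(\<lambda>\<omega>. h k l \<omega> * W \<omega>) \<in> borel_measurable (gen_sigma {HV k l, XiV k l, PhiV k})"
      unfolding W_def by measurable
    note factor = indep_mult_gen_sigma[OF disjoint h_meas_gen this integrable_h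
        integrable_channel_projected_gradient[of l, folded W_def]]
    then show ?thesis
      using False h_mean by simp
  qed
  then show "integrable M (\<lambda>\<omega>. h k i \<omega> * (h k l \<omega> * ((gf l \<theta> (xi k l \<omega>) \<bullet> Phi k \<omega>) * Phi k \<omega> $ j)))"
    and "(\<integral>\<omega>. h k i \<omega> * (h k l \<omega> * ((gf l \<theta> (xi k l \<omega>) \<bullet> Phi k \<omega>) * Phi k \<omega> $ j)) \<partial>M)
      = (if i = l then c l * (b1 * gF l \<theta> $ j) else 0)"
    unfolding W_def by simp_all
qed

lemma
  shows integrable_noise_channel:
      "integrable M (\<lambda>\<omega>. n1 k \<omega> * (h k l \<omega> * ((gf l \<theta> (xi k l \<omega>) \<bullet> Phi k \<omega>) * Phi k \<omega> $ j)))"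
    and integral_noise_channel:
      "(\<integral>\<omega>. n1 k \<omega> * (h k l \<omega> * ((gf l \<theta> (xi k l \<omega>) \<bullet> Phi k \<omega>) * Phi k \<omega> $ j)) \<partial>M) = 0"
proof -
  have disjoint: "{N1V k} \<inter> {HV k l, XiV k l, PhiV k} = {}"
    by simp
  have X_meas: "n1 k \<in> borel_measurable (gen_sigma {N1V k})"
    by measurable
  have Y_meas: "(\<lambda>\<omega>. h k l \<omega> * ((gf l \<theta> (xi k l \<omega>) \<bullet> Phi k \<omega>) * Phi k \<omega> $ j))
      \<in> borel_measurable (gen_sigma {HV k l, XiV k l, PhiV k})"
    by measurable
  note factor = indep_mult_gen_sigma[OF disjoint X_meas Y_meas integrable_n1 integrable_channel_projected_gradient]
  then show "integrable M (\<lambda>\<omega>. n1 k \<omega> * (h k l \<omega> * ((gf l \<theta> (xi k l \<omega>) \<bullet> Phi k \<omega>) * Phi k \<omega> $ j)))"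
    and "(\<integral>\<omega>. n1 k \<omega> * (h k l \<omega> * ((gf l \<theta> (xi k l \<omega>) \<bullet> Phi k \<omega>) * Phi k \<omega> $ j)) \<partial>M) = 0"
    using n1_mean by simp_all
qed

lemma
  shows integrable_noise_weighted_channel: "integrable M (\<lambda>\<omega>. n2 k \<omega> * (a i * (h k i \<omega> * Phi k \<omega> $ j)))"
    and integral_noise_weighted_channel: "(\<integral>\<omega>. n2 k \<omega> * (a i * (h k i \<omega> * Phi k \<omega> $ j)) \<partial>M) = 0"
proof -
  have disjoint: "{HV k i} \<inter> {PhiV k} = {}"
    by simp
  have X_meas: "h k i \<in> borel_measurable (gen_sigma {HV k i})"
    by measurable
  have Y_meas: "(\<lambda>\<omega>. Phi k \<omega> $ j) \<in> borel_measurable (gen_sigma {PhiV k})"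
    by measurable
  have Y_integrable: "integrable M (\<lambda>\<omega>. a i * (h k i \<omega> * Phi k \<omega> $ j))"
    using indep_mult_gen_sigma(1)[OF disjoint X_meas Y_meas integrable_h integrable_Phi_nth] by simp
  have disjoint': "{N2V k} \<inter> {HV k i, PhiV k} = {}"
    by simp
  have X_meas': "n2 k \<in> borel_measurable (gen_sigma {N2V k})"
    by measurable
  have Y_meas': "(\<lambda>\<omega>. a i * (h k i \<omega> * Phi k \<omega> $ j)) \<in> borel_measurable (gen_sigma {HV k i, PhiV k})"
    by measurable
  show "integrable M (\<lambda>\<omega>. n2 k \<omega> * (a i * (h k i \<omega> * Phi k \<omega> $ j)))"
    and "(\<integral>\<omega>. n2 k \<omega> * (a i * (h k i \<omega> * Phi k \<omega> $ j)) \<partial>M) = 0"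
    using indep_mult_gen_sigma[OF disjoint' X_meas' Y_meas' integrable_n2 Y_integrable] n2_mean by simp_all
qed

lemma
  shows integrable_two_noises: "integrable M (\<lambda>\<omega>. n2 k \<omega> * (n1 k \<omega> * Phi k \<omega> $ j))"
    and integral_two_noises: "(\<integral>\<omega>. n2 k \<omega> * (n1 k \<omega> * Phi k \<omega> $ j) \<partial>M) = 0"
proof -
  have disjoint: "{N1V k} \<inter> {PhiV k} = {}"
    by simp
  have X_meas: "n1 k \<in> borel_measurable (gen_sigma {N1V k})"
    by measurable
  have Y_meas: "(\<lambda>\<omega>. Phi k \<omega> $ j) \<in> borel_measurable (gen_sigma {PhiV k})"
    by measurable
  have Y_integrable: "integrable M (\<lambda>\<omega>. n1 k \<omega> * Phi k \<omega> $ j)"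
    using indep_mult_gen_sigma(1)[OF disjoint X_meas Y_meas integrable_n1 integrable_Phi_nth] .
  have disjoint': "{N2V k} \<inter> {N1V k, PhiV k} = {}"
    by simp
  have X_meas': "n2 k \<in> borel_measurable (gen_sigma {N2V k})"
    by measurable
  have Y_meas': "(\<lambda>\<omega>. n1 k \<omega> * Phi k \<omega> $ j) \<in> borel_measurable (gen_sigma {N1V k, PhiV k})"
    by measurable
  show "integrable M (\<lambda>\<omega>. n2 k \<omega> * (n1 k \<omega> * Phi k \<omega> $ j))"
    and "(\<integral>\<omega>. n2 k \<omega> * (n1 k \<omega> * Phi k \<omega> $ j) \<partial>M) = 0"
    using indep_mult_gen_sigma[OF disjoint' X_meas' Y_meas' integrable_n2 Y_integrable] n2_mean by simp_all
qed

lemma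
  shows integrable_round_estimate: "integrable M (\<lambda>\<omega>. round_estimate k \<theta> \<omega> $ j)"
    and integral_round_estimate: "(\<integral>\<omega>. round_estimate k \<theta> \<omega> $ j \<partial>M) = b1 * (\<Sum>i\<in>UNIV. gF i \<theta>) $ j"
proof -
  have expand: "round_estimate k \<theta> \<omega> $ j =
      (\<Sum>i\<in>UNIV. \<Sum>l\<in>UNIV. a i * (h k i \<omega> * (h k l \<omega> * ((gf l \<theta> (xi k l \<omega>) \<bullet> Phi k \<omega>) * Phi k \<omega> $ j)))) +
      (\<Sum>l\<in>UNIV. n1 k \<omega> * (h k l \<omega> * ((gf l \<theta> (xi k l \<omega>) \<bullet> Phi k \<omega>) * Phi k \<omega> $ j))) +
      (\<Sum>i\<in>UNIV. n2 k \<omega> * (a i * (h k i \<omega> * Phi k \<omega> $ j))) + n2 k \<omega> * (n1 k \<omega> * Phi k \<omega> $ j)" for \<omega>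
    unfolding round_estimate_def by (rule gprime_nth_expand)
  note integrable_terms = integrable_two_channels integrable_noise_channel
    integrable_noise_weighted_channel integrable_two_noises
  note integral_terms = integral_two_channels integral_noise_channel
    integral_noise_weighted_channel integral_two_noises
  show "integrable M (\<lambda>\<omega>. round_estimate k \<theta> \<omega> $ j)"
    unfolding expand by (intro Bochner_Integration.integrable_add Bochner_Integration.integrable_sum
        integrable_mult_right integrable_terms)
  have "(\<integral>\<omega>. round_estimate k \<theta> \<omega> $ j \<partial>M)
      = (\<Sum>i\<in>UNIV. \<Sum>l\<in>UNIV. a i * (if i = l then c l * (b1 * gF l \<theta> $ j) else 0))"
    unfolding expand
    by (simp add: Bochner_Integration.integral_add Bochner_Integration.integral_sum
        Bochner_Integration.integrable_sum integrable_terms integral_terms)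
  also have "\<dots> = (\<Sum>l\<in>UNIV. b1 * gF l \<theta> $ j)"
    using c_pos by (simp add: a_def if_distrib[of "\<lambda>x. _ * x"] sum.delta' less_imp_neq[symmetric] cong: if_cong)
  finally show "(\<integral>\<omega>. round_estimate k \<theta> \<omega> $ j \<partial>M) = b1 * (\<Sum>i\<in>UNIV. gF i \<theta>) $ j"
    by (simp add: sum_distrib_left)
qed

end

lemma theta_measurable_gen_sigma:
  "{v. rvar_time v \<le> m} \<subseteq> J \<Longrightarrow> theta m \<in> borel_measurable (gen_sigma J)"
proof (induction m)
  case 0
  then have "Theta0 \<in> J"
    by auto
  then show ?case
    by measurable
next
  case (Suc m)
  then have [measurable]: "theta m \<in> borel_measurable (gen_sigma J)"
    by (intro Suc.IH) auto
  have [simp]: "PhiV m \<in> J" "HV m i \<in> J" "N1V m \<in> J" "N2V m \<in> J" "XiV m i \<in> J" for i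
    using Suc.prems by auto
  show ?case
    unfolding iter by measurable
qed

definition hist_generators :: "nat \<Rightarrow> 'a set set" where
  "hist_generators k = (\<Union>m\<in>{..k}. sets (vimage_algebra (space M) (theta m) borel)) \<union>
     (\<Union>m\<in>{..<k}. \<Union>i. sets (vimage_algebra (space M) (xi m i) S))"

lemma hist_generators_subset: "hist_generators k \<subseteq> sets (gen_sigma {v. rvar_time v \<le> k})"
proof -
  have "sets (vimage_algebra (space M) (theta m) borel) \<subseteq> sets (gen_sigma {v. rvar_time v \<le> k})"
    if "m \<le> k" for m
    using that theta_measurable_gen_sigma[of m] by (simp add: measurable_iff_sets subset_eq)
  moreover have "sets (vimage_algebra (space M) (xi m i) S) \<subseteq> sets (gen_sigma {v. rvar_time v \<le> k})"
    if "m < k" for m i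
  proof -
    have "xi m i \<in> measurable (gen_sigma {v. rvar_time v \<le> k}) S"
      using that by (intro measurable_gen_sigma_rvar) simp
    then show ?thesis
      by (simp add: measurable_iff_sets)
  qed
  ultimately show ?thesis
    unfolding hist_generators_def by blast
qed

lemma
  shows space_hist: "space (hist M theta S xi k) = space M"
    and sets_hist: "sets (hist M theta S xi k) = sigma_sets (space M) (hist_generators k)"
proof -
  have "hist_generators k \<subseteq> Pow (space M)"
    using hist_generators_subset[of k] sets.space_closed[of "gen_sigma {v. rvar_time v \<le> k}"] by simp
  then show "space (hist M theta S xi k) = space M"
    and "sets (hist M theta S xi k) = sigma_sets (space M) (hist_generators k)"
    unfolding hist_def hist_generators_def[symmetric] by simp_all
qed

lemma sets_hist_subset: "sets (hist M theta S xi k) \<subseteq> sets (gen_sigma {v. rvar_time v \<le> k})"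
  unfolding sets_hist using sets.sigma_sets_subset[OF hist_generators_subset] by simp

lemma subalgebra_hist: "subalgebra M (hist M theta S xi k)"
  using space_hist sets_hist_subset[of k] subalgebra_gen_sigma[of "{v. rvar_time v \<le> k}"]
  by (auto simp: subalgebra_def)

lemma theta_measurable_hist: "theta k \<in> borel_measurable (hist M theta S xi k)"
proof -
  have "sets (vimage_algebra (space M) (theta k) borel) \<subseteq> hist_generators k"
    unfolding hist_generators_def by blast
  then have "sets (vimage_algebra (space M) (theta k) borel) \<subseteq> sets (hist M theta S xi k)"
    unfolding sets_hist by (blast intro: sigma_sets.Basic)
  then show ?thesis
    by (simp add: measurable_iff_sets space_hist)
qed

lemma cond_exp_round_estimate:
  "AE \<omega> in M. real_cond_exp M (hist M theta S xi k) (\<lambda>\<omega>. round_estimate k (theta k \<omega>) \<omega> $ j) \<omega>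
     = b1 * (\<Sum>i\<in>UNIV. gF i (theta k \<omega>)) $ j"
proof -
  have "{v. rvar_time v \<le> k} \<inter> {v. rvar_time v = Suc k} = {}"
    by auto
  note independent = indep_set_gen_sigma[OF this]
  let ?K = "gen_sigma {v. rvar_time v = Suc k}"
  have [measurable]: "Phi k \<in> borel_measurable ?K" "h k i \<in> borel_measurable ?K"
    "n1 k \<in> borel_measurable ?K" "n2 k \<in> borel_measurable ?K" "xi k i \<in> measurable ?K S" for i
    by (intro measurable_gen_sigma_rvar; simp)+
  have "(\<lambda>p. round_estimate k (fst p) (snd p) $ j) \<in> borel_measurable (borel \<Otimes>\<^sub>M ?K)"
    unfolding round_estimate_def by measurable
  from real_cond_exp_indep_freeze[OF subalgebra_hist sets_hist_subset subalgebra_gen_sigma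
      subalgebra_gen_sigma independent theta_measurable_hist this integrable_round_estimate]
  show ?thesis
    by (simp add: integral_round_estimate)
qed

end

theorem lemma3:
  fixes M :: "'a measure" and S :: "'x measure"
    and D :: "'n::finite \<Rightarrow> 'x measure"
    and f :: "'n \<Rightarrow> real^'d \<Rightarrow> 'x \<Rightarrow> real"
    and gf :: "'n \<Rightarrow> real^'d \<Rightarrow> 'x \<Rightarrow> real^'d"
    and gF :: "'n \<Rightarrow> real^'d \<Rightarrow> real^'d"
    and Hs :: "'n \<Rightarrow> real^'d \<Rightarrow> real^'d^'d"
    and L :: "'x \<Rightarrow> real"
    and b b1 b2 \<sigma>1 \<sigma>2 :: real
    and Phi :: "nat \<Rightarrow> 'a \<Rightarrow> real^'d"
    and h :: "nat \<Rightarrow> 'n \<Rightarrow> 'a \<Rightarrow> real"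
    and c a :: "'n \<Rightarrow> real"
    and n1 n2 :: "nat \<Rightarrow> 'a \<Rightarrow> real"
    and xi :: "nat \<Rightarrow> 'n \<Rightarrow> 'a \<Rightarrow> 'x"
    and theta :: "nat \<Rightarrow> 'a \<Rightarrow> real^'d"
    and eta :: "nat \<Rightarrow> real"
    and k :: nat
  assumes P: "prob_space M"
    \<comment> \<open>data distributions and losses\<close>
    and D_prob: "\<And>i. prob_space (D i)"
    and D_sets: "\<And>i. sets (D i) = sets S"
    and f_grad: "\<And>i \<theta> \<xi>. ((\<lambda>t. f i t \<xi>) has_derivative (\<lambda>v. gf i \<theta> \<xi> \<bullet> v)) (at \<theta>)"
    and F_grad: "\<And>i \<theta>. ((\<lambda>t. \<integral>\<xi>. f i t \<xi> \<partial>D i) has_derivative (\<lambda>v. gF i \<theta> \<bullet> v)) (at \<theta>)"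
    and gf_int: "\<And>i \<theta>. integrable (D i) (gf i \<theta>)"
    and gf_exp: "\<And>i \<theta>. (\<integral>\<xi>. gf i \<theta> \<xi> \<partial>D i) = gF i \<theta>"
    \<comment> \<open>(i): continuous gradient and Hessian, Hessian bounded in spectral norm\<close>
    and gF_cont: "\<And>i. continuous_on UNIV (gF i)"
    and Hs_deriv: "\<And>i \<theta>. (gF i has_derivative (\<lambda>v. Hs i \<theta> *v v)) (at \<theta>)"
    and Hs_cont: "\<And>i. continuous_on UNIV (Hs i)"
    and Hs_bound: "\<And>i \<theta>. onorm (\<lambda>v. Hs i \<theta> *v v) \<le> b"
    \<comment> \<open>(ii): Lipschitz losses with finite expectation\<close>
    and f_lip: "\<And>i \<xi>. lipschitz_on (L \<xi>) UNIV (\<lambda>t. f i t \<xi>)"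
    and f_int: "\<And>i \<theta>. integrable (D i) (f i \<theta>)"
    \<comment> \<open>(iv): perturbations\<close>
    and Phi_meas: "\<And>k. Phi k \<in> borel_measurable M"
    and Phi_orth: "\<And>k j l. j \<noteq> l \<Longrightarrow> prob_space.expectation M (\<lambda>\<omega>. Phi k \<omega> $ j * Phi k \<omega> $ l) = 0"
    and Phi_sq: "\<And>k j. prob_space.expectation M (\<lambda>\<omega>. (Phi k \<omega> $ j)^2) = b1"
    and b1_pos: "b1 > 0"
    and Phi_bound: "\<And>k \<omega>. \<omega> \<in> space M \<Longrightarrow> norm (Phi k \<omega>) \<le> b2"
    and eta_pos: "\<And>k. eta k > 0"
    \<comment> \<open>wireless model\<close>
    and h_meas: "\<And>k i. h k i \<in> borel_measurable M"
    and h_sq_int: "\<And>k i. integrable M (\<lambda>\<omega>. (h k i \<omega>)^2)"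
    and h_mean: "\<And>k i. prob_space.expectation M (h k i) = 0"
    and h_var: "\<And>k i. prob_space.expectation M (\<lambda>\<omega>. (h k i \<omega>)^2) = c i"
    and c_pos: "\<And>i. c i > 0"
    and a_def: "\<And>i. a i = 1 / c i"
    and n1_meas: "\<And>k. n1 k \<in> borel_measurable M"
    and n2_meas: "\<And>k. n2 k \<in> borel_measurable M"
    and n1_sq_int: "\<And>k. integrable M (\<lambda>\<omega>. (n1 k \<omega>)^2)"
    and n2_sq_int: "\<And>k. integrable M (\<lambda>\<omega>. (n2 k \<omega>)^2)"
    and n1_mean: "\<And>k. prob_space.expectation M (n1 k) = 0"
    and n2_mean: "\<And>k. prob_space.expectation M (n2 k) = 0"
    and n1_var: "\<And>k. prob_space.expectation M (\<lambda>\<omega>. (n1 k \<omega>)^2) = \<sigma>1^2"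
    and n2_var: "\<And>k. prob_space.expectation M (\<lambda>\<omega>. (n2 k \<omega>)^2) = \<sigma>2^2"
    and xi_meas: "\<And>k i. xi k i \<in> measurable M S"
    and xi_distr: "\<And>k i. distr M S (xi k i) = D i"
    and theta0_meas: "theta 0 \<in> borel_measurable M"
    \<comment> \<open>mutual independence of all primitive random variables (and of the initial point)\<close>
    and indep: "prob_space.indep_sets M
       (\<lambda>v. case v of
           Theta0 \<Rightarrow> sets (vimage_algebra (space M) (theta 0) borel)
         | PhiV m \<Rightarrow> sets (vimage_algebra (space M) (Phi m) borel)
         | HV m i \<Rightarrow> sets (vimage_algebra (space M) (h m i) borel)
         | N1V m \<Rightarrow> sets (vimage_algebra (space M) (n1 m) borel)
         | N2V m \<Rightarrow> sets (vimage_algebra (space M) (n2 m) borel)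
         | XiV m i \<Rightarrow> sets (vimage_algebra (space M) (xi m i) S)) UNIV"
    \<comment> \<open>EFOFL iteration\<close>
    and iter: "\<And>m \<omega>. theta (Suc m) \<omega> = theta m \<omega> - eta m *\<^sub>R
         gprime a (Phi m \<omega>) (\<lambda>i. h m i \<omega>) (n1 m \<omega>) (\<lambda>i. gf i (theta m \<omega>) (xi m i \<omega>)) (n2 m \<omega>)"
  shows "\<forall>j. AE \<omega> in M.
     real_cond_exp M (hist M theta S xi k)
       (\<lambda>\<omega>. gprime a (Phi k \<omega>) (\<lambda>i. h k i \<omega>) (n1 k \<omega>) (\<lambda>i. gf i (theta k \<omega>) (xi k i \<omega>)) (n2 k \<omega>) $ j) \<omega>
     = b1 * (\<Sum>i\<in>UNIV. gF i (theta k \<omega>)) $ j"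
proof
  fix j
  interpret efofl M S D f gf gF b1 b2 Phi h c a n1 n2 xi theta eta
    by (intro efofl.intro efofl_axioms.intro P; (fact | unfold efofl_generator_def, fact)?)
  show "AE \<omega> in M.
     real_cond_exp M (hist M theta S xi k)
       (\<lambda>\<omega>. gprime a (Phi k \<omega>) (\<lambda>i. h k i \<omega>) (n1 k \<omega>) (\<lambda>i. gf i (theta k \<omega>) (xi k i \<omega>)) (n2 k \<omega>) $ j) \<omega>
     = b1 * (\<Sum>i\<in>UNIV. gF i (theta k \<omega>)) $ j"
    using cond_exp_round_estimate[of k j] by (simp add: round_estimate_def)
qed

end
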